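(* Let $\{(y_t,x_t,f_t)\}_{t=1}^T$ be data with $y_t\in\mathbb R$, $x_t=(x_{1,t},\dots,x_{d_x,t})'\in\mathbb R^{d_x}$, $f_t\in\mathbb R^{d_f}$. Let $\mathcal A\subset\mathbb R^{2d_x}$ be compact and let $\Gamma\subset\mathbb R^{d_f}$ be compact. Let $L_j\le U_j$, $j=1,\dots,d_x$, be constants such that every $(\beta',\delta')'\in\mathcal A$ satisfies $L_j\le\delta_j\le U_j$ for all $j$. Let $M_t=\max_{\gamma\in\Gamma}|f_t'\gamma|$, fix $\epsilon>0$ and $0<\tau_1<\tau_2<1$. Original problem: minimize $$\mathbb S_T(\alpha,\gamma)=\frac1T\sum_{t=1}^T\big(y_t-x_t'\beta-x_t'\delta\,1\{f_t'\gamma>0\}\big)^2,\qquad \alpha=(\beta',\delta')',$$ over $(\alpha,\gamma)\in\mathcal A\times\Gamma$ subject to $\tau_1\le T^{-1}\sum_{t=1}^T1\{f_t'\gamma>0\}\le\tau_2$; let $(\hat\alpha,\hat\gamma)$ be a minimizer. MIQP problem: with decision variables $\beta,\delta\in\mathbb R^{d_x}$, $\gamma\in\mathbb R^{d_f}$, $d=(d_1,\dots,d_T)$ and real $\ell_{j,t}$ ($j\le d_x$, $t\le T$), minimize $$\mathbb Q_T(\beta,\ell)=\frac1T\sum_{t=1}^T\Big(y_t-x_t'\beta-\sum_{j=1}^{d_x}x_{j,t}\ell_{j,t}\Big)^2$$ subject to, for all $t$ and $j$: $(\beta,\delta)\in\mathcal A$, $\gamma\in\Gamma$, $d_t\in\{0,1\}$,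 $L_j\le\delta_j\le U_j$, $(d_t-1)(M_t+\epsilon)<f_t'\gamma\le d_tM_t$, $d_tL_j\le\ell_{j,t}\le d_tU_j$, $L_j(1-d_t)\le\delta_j-\ell_{j,t}\le U_j(1-d_t)$, and $\tau_1\le T^{-1}\sum_t d_t\le\tau_2$. Let $(\bar\beta,\bar\delta,\bar\gamma,\bar d,\bar\ell)$ be a minimizer and $\bar\alpha=(\bar\beta',\bar\delta')'$. Then $\mathbb S_T(\hat\alpha,\hat\gamma)=\mathbb S_T(\bar\alpha,\bar\gamma)$ (and this common value equals $\mathbb Q_T(\bar\beta,\bar\ell)$).
   Context: This is the mixed integer quadratic programming (MIQP) reformulation of the least-squares estimator of the two-regime regression $y_t=x_t'\beta_0+x_t'\delta_0 1\{f_t'\gamma_0>0\}+\varepsilon_t$. Both minimizers are assumed to exist. *)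

theory Defs
  imports "HOL-Analysis.Analysis"
begin

text \<open>The parameter alpha = (beta, delta) is a pair of vectors,
  so the set A is a subset of R^{d_x} x R^{d_x} (identified with R^{2 d_x}).\<close>

definition ind :: "bool \<Rightarrow> real" where
  "ind P = (if P then 1 else 0)"

definition S_T :: "nat \<Rightarrow> (nat \<Rightarrow> real) \<Rightarrow> (nat \<Rightarrow> real^'x) \<Rightarrow> (nat \<Rightarrow> real^'f)
    \<Rightarrow> real^'x \<Rightarrow> real^'x \<Rightarrow> real^'f \<Rightarrow> real" where
  "S_T T y x f b dl g =
     (\<Sum>t\<in>{1..T}. (y t - x t \<bullet> b - (x t \<bullet> dl) * ind (f t \<bullet> g > 0))\<^sup>2) / real T"

definition orig_feasible :: "nat \<Rightarrow> (nat \<Rightarrow> real^'f) \<Rightarrow> ((real^'x) \<times> (real^'x)) set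
    \<Rightarrow> (real^'f) set \<Rightarrow> real \<Rightarrow> real \<Rightarrow> real^'x \<Rightarrow> real^'x \<Rightarrow> real^'f \<Rightarrow> bool" where
  "orig_feasible T f A \<Gamma> \<tau>1 \<tau>2 b dl g \<longleftrightarrow>
     (b, dl) \<in> A \<and> g \<in> \<Gamma> \<and>
     \<tau>1 \<le> (\<Sum>t\<in>{1..T}. ind (f t \<bullet> g > 0)) / real T \<and>
     (\<Sum>t\<in>{1..T}. ind (f t \<bullet> g > 0)) / real T \<le> \<tau>2"

text \<open>M_t = max over Gamma of |f_t' gamma| (a maximum since Gamma is compact).\<close>
definition M_t :: "(nat \<Rightarrow> real^'f) \<Rightarrow> (real^'f) set \<Rightarrow> nat \<Rightarrow> real" where
  "M_t f \<Gamma> t = Sup ((\<lambda>g. \<bar>f t \<bullet> g\<bar>) ` \<Gamma>)"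

definition Q_T :: "nat \<Rightarrow> (nat \<Rightarrow> real) \<Rightarrow> (nat \<Rightarrow> real^'x)
    \<Rightarrow> real^'x \<Rightarrow> (nat \<Rightarrow> real^'x) \<Rightarrow> real" where
  "Q_T T y x b l =
     (\<Sum>t\<in>{1..T}. (y t - x t \<bullet> b - (\<Sum>j\<in>UNIV. (x t $ j) * (l t $ j)))\<^sup>2) / real T"

text \<open>Decision variables of the MIQP: b, dl, g, d (d t for t = 1..T), l (l t $ j = ell_{j,t}).\<close>
definition miqp_feasible :: "nat \<Rightarrow> (nat \<Rightarrow> real^'f) \<Rightarrow> ((real^'x) \<times> (real^'x)) set
    \<Rightarrow> (real^'f) set \<Rightarrow> real^'x \<Rightarrow> real^'x \<Rightarrow> real \<Rightarrow> real \<Rightarrow> real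
    \<Rightarrow> real^'x \<Rightarrow> real^'x \<Rightarrow> real^'f \<Rightarrow> (nat \<Rightarrow> real) \<Rightarrow> (nat \<Rightarrow> real^'x) \<Rightarrow> bool" where
  "miqp_feasible T f A \<Gamma> L U \<epsilon> \<tau>1 \<tau>2 b dl g d l \<longleftrightarrow>
     (b, dl) \<in> A \<and> g \<in> \<Gamma> \<and>
     (\<forall>j. L $ j \<le> dl $ j \<and> dl $ j \<le> U $ j) \<and>
     (\<forall>t\<in>{1..T}. d t \<in> {0, 1} \<and>
        (d t - 1) * (M_t f \<Gamma> t + \<epsilon>) < f t \<bullet> g \<and> f t \<bullet> g \<le> d t * M_t f \<Gamma> t \<and>
        (\<forall>j. d t * L $ j \<le> l t $ j \<and> l t $ j \<le> d t * U $ j \<and>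
             L $ j * (1 - d t) \<le> dl $ j - l t $ j \<and> dl $ j - l t $ j \<le> U $ j * (1 - d t))) \<and>
     \<tau>1 \<le> (\<Sum>t\<in>{1..T}. d t) / real T \<and> (\<Sum>t\<in>{1..T}. d t) / real T \<le> \<tau>2"

end

theory Submission
  imports Defs
begin

text \<open>The big-M constraints force every MIQP-feasible point to have \<open>d\<^sub>t = 1{f\<^sub>t'\<gamma> > 0}\<close>
  and \<open>\<ell>\<^sub>t = d\<^sub>t \<delta>\<close>, so its projection \<open>(\<beta>, \<delta>, \<gamma>)\<close> is feasible for the original problem with
  \<open>\<bbbQ>\<^sub>T = \<bbbS>\<^sub>T\<close>. Conversely, since \<open>|f\<^sub>t'\<gamma>| \<le> M\<^sub>t\<close> on \<open>\<Gamma>\<close> and \<open>\<epsilon> > 0\<close>, every feasible point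
  of the original problem lifts to an MIQP-feasible point with these \<open>d\<close> and \<open>\<ell>\<close>.\<close>

lemma abs_inner_le_M_t:
  assumes "compact \<Gamma>" "g \<in> \<Gamma>"
  shows "\<bar>f t \<bullet> g\<bar> \<le> M_t f \<Gamma> t"
proof -
  have "compact ((\<lambda>g. \<bar>f t \<bullet> g\<bar>) ` \<Gamma>)"
    using assms(1) by (intro compact_continuous_image continuous_intros)
  then have "bdd_above ((\<lambda>g. \<bar>f t \<bullet> g\<bar>) ` \<Gamma>)"
    by (intro bounded_imp_bdd_above compact_imp_bounded)
  then show ?thesis
    unfolding M_t_def using assms(2) by (rule cSUP_upper2) simp
qed

lemma miqp_feasible_indicator:
  assumes "miqp_feasible T f A \<Gamma> L U \<epsilon> \<tau>1 \<tau>2 b dl g d l" and "t \<in> {1..T}"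
  shows "d t = ind (f t \<bullet> g > 0)" and "l t = d t *\<^sub>R dl"
proof -
  from assms have d01: "d t \<in> {0, 1}"
    and lower: "(d t - 1) * (M_t f \<Gamma> t + \<epsilon>) < f t \<bullet> g"
    and upper: "f t \<bullet> g \<le> d t * M_t f \<Gamma> t"
    and l_bounds: "\<forall>j. d t * L $ j \<le> l t $ j \<and> l t $ j \<le> d t * U $ j \<and>
       L $ j * (1 - d t) \<le> dl $ j - l t $ j \<and> dl $ j - l t $ j \<le> U $ j * (1 - d t)"
    unfolding miqp_feasible_def by auto
  consider "d t = 0" | "d t = 1" using d01 by auto
  then have "d t = ind (f t \<bullet> g > 0) \<and> l t = d t *\<^sub>R dl"
  proof cases
    case 1
    with upper l_bounds show ?thesis
      by (auto simp: ind_def vec_eq_iff intro: order_antisym)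
  next
    case 2
    with lower l_bounds show ?thesis
      by (auto simp: ind_def vec_eq_iff intro: order_antisym)
  qed
  then show "d t = ind (f t \<bullet> g > 0)" and "l t = d t *\<^sub>R dl" by auto
qed

lemma Q_T_eq_S_T_if_miqp_feasible:
  assumes "miqp_feasible T f A \<Gamma> L U \<epsilon> \<tau>1 \<tau>2 b dl g d l"
  shows "Q_T T y x b l = S_T T y x f b dl g"
proof -
  have "(\<Sum>j\<in>UNIV. x t $ j * l t $ j) = (x t \<bullet> dl) * ind (f t \<bullet> g > 0)" if "t \<in> {1..T}" for t
    using miqp_feasible_indicator[OF assms that]
    by (simp add: inner_vec_def sum_distrib_right mult_ac)
  then show ?thesis
    unfolding Q_T_def S_T_def by (intro arg_cong[where f = "\<lambda>s. s / real T"] sum.cong) auto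
qed

lemma miqp_feasible_imp_orig_feasible:
  assumes "miqp_feasible T f A \<Gamma> L U \<epsilon> \<tau>1 \<tau>2 b dl g d l"
  shows "orig_feasible T f A \<Gamma> \<tau>1 \<tau>2 b dl g"
proof -
  have "(\<Sum>t\<in>{1..T}. d t) = (\<Sum>t\<in>{1..T}. ind (f t \<bullet> g > 0))"
    using miqp_feasible_indicator(1)[OF assms] by (rule sum.cong[OF refl])
  with assms show ?thesis
    unfolding miqp_feasible_def orig_feasible_def by auto
qed

lemma orig_feasible_imp_miqp_feasible:
  assumes "compact \<Gamma>" and "\<epsilon> > 0"
    and "\<forall>b dl j. (b, dl) \<in> A \<longrightarrow> L $ j \<le> dl $ j \<and> dl $ j \<le> U $ j"
    and "orig_feasible T f A \<Gamma> \<tau>1 \<tau>2 b dl g"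
  shows "miqp_feasible T f A \<Gamma> L U \<epsilon> \<tau>1 \<tau>2 b dl g
           (\<lambda>t. ind (f t \<bullet> g > 0)) (\<lambda>t. ind (f t \<bullet> g > 0) *\<^sub>R dl)"
proof -
  from assms(4) have "(b, dl) \<in> A" and "g \<in> \<Gamma>"
    unfolding orig_feasible_def by auto
  with assms(3) have dl_bounds: "\<forall>j. L $ j \<le> dl $ j \<and> dl $ j \<le> U $ j" by blast
  have "- M_t f \<Gamma> t - \<epsilon> < f t \<bullet> g \<and> f t \<bullet> g \<le> M_t f \<Gamma> t" for t
    using abs_inner_le_M_t[OF assms(1) \<open>g \<in> \<Gamma>\<close>, of f t] assms(2) by linarith
  with assms(2,4) dl_bounds \<open>(b, dl) \<in> A\<close> \<open>g \<in> \<Gamma>\<close> show ?thesis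
    unfolding miqp_feasible_def orig_feasible_def
    by (auto simp: ind_def not_less)
qed

theorem theorem1:
  fixes T :: nat and y :: "nat \<Rightarrow> real" and x :: "nat \<Rightarrow> real^'x" and f :: "nat \<Rightarrow> real^'f"
    and A :: "((real^'x) \<times> (real^'x)) set" and \<Gamma> :: "(real^'f) set"
    and L U :: "real^'x" and \<epsilon> \<tau>1 \<tau>2 :: real
    and bh dh :: "real^'x" and gh :: "real^'f"
    and bb db :: "real^'x" and gb :: "real^'f" and dd :: "nat \<Rightarrow> real" and lb :: "nat \<Rightarrow> real^'x"
  assumes "compact A" and "compact \<Gamma>"
    and "\<forall>j. L $ j \<le> U $ j"
    and "\<forall>b dl j. (b, dl) \<in> A \<longrightarrow> L $ j \<le> dl $ j \<and> dl $ j \<le> U $ j"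
    and "\<epsilon> > 0" and "0 < \<tau>1" and "\<tau>1 < \<tau>2" and "\<tau>2 < 1"
    and "orig_feasible T f A \<Gamma> \<tau>1 \<tau>2 bh dh gh"
    and "\<forall>b dl g. orig_feasible T f A \<Gamma> \<tau>1 \<tau>2 b dl g \<longrightarrow>
                 S_T T y x f bh dh gh \<le> S_T T y x f b dl g"
    and "miqp_feasible T f A \<Gamma> L U \<epsilon> \<tau>1 \<tau>2 bb db gb dd lb"
    and "\<forall>b dl g d l. miqp_feasible T f A \<Gamma> L U \<epsilon> \<tau>1 \<tau>2 b dl g d l \<longrightarrow>
                 Q_T T y x bb lb \<le> Q_T T y x b l"
  shows "S_T T y x f bh dh gh = S_T T y x f bb db gb \<and> S_T T y x f bb db gb = Q_T T y x bb lb"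
proof -
  have Q_bar: "Q_T T y x bb lb = S_T T y x f bb db gb"
    using Q_T_eq_S_T_if_miqp_feasible[OF assms(11)] .
  have "S_T T y x f bh dh gh \<le> S_T T y x f bb db gb"
    using assms(10) miqp_feasible_imp_orig_feasible[OF assms(11)] by blast
  moreover
  have lifted: "miqp_feasible T f A \<Gamma> L U \<epsilon> \<tau>1 \<tau>2 bh dh gh
      (\<lambda>t. ind (f t \<bullet> gh > 0)) (\<lambda>t. ind (f t \<bullet> gh > 0) *\<^sub>R dh)"
    using orig_feasible_imp_miqp_feasible[OF assms(2,5,4,9)] .
  have "Q_T T y x bb lb \<le> S_T T y x f bh dh gh"
    using assms(12) lifted Q_T_eq_S_T_if_miqp_feasible[OF lifted] by metis
  ultimately show ?thesis
    using Q_bar by linarith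
qed

end
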